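(* Let $p$, $F$, $a$, $K$, $J_1$ be as in the context. The sequence $$0\longrightarrow\langle[a]\rangle\xrightarrow{\ i\ }F^\times/F^{\times p}\xrightarrow{\ \epsilon\ }J_1\xrightarrow{\ N\ }\langle[a]\rangle$$ is well defined and exact, where $\langle[a]\rangle\subseteq F^\times/F^{\times p}$ is the subgroup generated by the class of $a$, $i$ is inclusion, $\epsilon$ is induced by the inclusion $F^\times\subseteq K^\times$, and $N$ is induced by the norm $N_{K/F}\colon K^\times\to F^\times$ (in particular $[N_{K/F}(\theta)]\in\langle[a]\rangle$ for every $[\theta]\in J_1$). Moreover, $N\colon J_1\to\langle[a]\rangle$ is surjective if and only if $\xi_p\in N_{K/F}(K^\times)$.
   Context: Let $p$ be a prime and $F$ a field of characteristic different from $p$ containing a primitive $p$th root of unity $\xi_p$. Let $a\in F^\times\setminus F^{\times p}$ and $K=F(\sqrt[p]{a})$, a cyclic extension of degree $p$; $K^\times=K\setminus\{0\}$. Let $G=\mathrm{Gal}(K/F)$, $J=K^\times/K^{\times p}$, and $J_1=J^G$ the submodule of $G$-fixed elements of $J$. *)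

theory Defs
  imports Main "HOL-Computational_Algebra.Primes"
begin

definition is_subfield :: "'k::field set \<Rightarrow> bool" where
  "is_subfield S \<longleftrightarrow> 0 \<in> S \<and> 1 \<in> S \<and>
     (\<forall>x\<in>S. \<forall>y\<in>S. x + y \<in> S \<and> x * y \<in> S) \<and>
     (\<forall>x\<in>S. - x \<in> S) \<and> (\<forall>x\<in>S. x \<noteq> 0 \<longrightarrow> inverse x \<in> S)"

text \<open>The whole field (type) is generated over F by alpha: K = F(alpha).\<close>
definition generated_by :: "'k::field set \<Rightarrow> 'k \<Rightarrow> bool" where
  "generated_by F \<alpha> \<longleftrightarrow>
     (\<forall>S. is_subfield S \<and> F \<subseteq> S \<and> \<alpha> \<in> S \<longrightarrow> S = UNIV)"

definition primitive_root :: "nat \<Rightarrow> 'k::field \<Rightarrow> bool" where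
  "primitive_root n \<xi> \<longleftrightarrow> \<xi> ^ n = 1 \<and> (\<forall>k. 0 < k \<and> k < n \<longrightarrow> \<xi> ^ k \<noteq> 1)"

definition is_field_aut :: "('k::field \<Rightarrow> 'k) \<Rightarrow> bool" where
  "is_field_aut \<sigma> \<longleftrightarrow> bij \<sigma> \<and> \<sigma> 1 = 1 \<and>
     (\<forall>x y. \<sigma> (x + y) = \<sigma> x + \<sigma> y) \<and> (\<forall>x y. \<sigma> (x * y) = \<sigma> x * \<sigma> y)"

definition Gal :: "'k::field set \<Rightarrow> ('k \<Rightarrow> 'k) set" where
  "Gal F = {\<sigma>. is_field_aut \<sigma> \<and> (\<forall>x\<in>F. \<sigma> x = x)}"

definition normKF :: "'k::field set \<Rightarrow> 'k \<Rightarrow> 'k" where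
  "normKF F \<theta> = (\<Prod>\<sigma>\<in>Gal F. \<sigma> \<theta>)"

definition classK :: "nat \<Rightarrow> 'k::field \<Rightarrow> 'k set" where
  "classK p \<theta> = {\<theta> * y ^ p | y. y \<noteq> 0}"

definition classF :: "'k::field set \<Rightarrow> nat \<Rightarrow> 'k \<Rightarrow> 'k set" where
  "classF F p x = {x * y ^ p | y. y \<in> F \<and> y \<noteq> 0}"

definition FmodP :: "'k::field set \<Rightarrow> nat \<Rightarrow> 'k set set" where
  "FmodP F p = {classF F p x | x. x \<in> F \<and> x \<noteq> 0}"

definition JK :: "nat \<Rightarrow> 'k::field set set" where
  "JK p = {classK p \<theta> | \<theta>. \<theta> \<noteq> 0}"

definition J1 :: "'k::field set \<Rightarrow> nat \<Rightarrow> 'k set set" where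
  "J1 F p = {c \<in> JK p. \<forall>\<sigma>\<in>Gal F. \<sigma> ` c = c}"

text \<open>The subgroup of F^x/F^{x p} generated by [a] (cyclic, so the powers of [a]).\<close>
definition gen_a :: "'k::field set \<Rightarrow> nat \<Rightarrow> 'k \<Rightarrow> 'k set set" where
  "gen_a F p a = {classF F p (a ^ k) | k. True}"

end

(*
  Since a is not a p-th power in F, the polynomial x^p - a, which splits over K as the product of
  the x - c alpha with c^p = 1, has no monic factor over F of degree 0 < d < p: the constant term
  of such a factor is a root of unity times alpha^d, and a Bezout argument puts alpha^d outside F.
  So K = F(alpha) has degree p, its automorphisms are the maps sigma_c : alpha |-> c alpha, all
  powers of sigma = sigma_xi, and F is the fixed field of sigma.

  A class [theta] lies in J_1 iff sigma theta = theta g^p for some g; then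
  d = theta * prod_{j<p} g sigma(g) ... sigma^(j-1)(g) satisfies d^p = N theta and
  sigma d = d N(g). Kummer theory (an element of F that is a p-th power in K lies in a^k F^p)
  turns this into [N theta] in <[a]>, and Hilbert 90 (N g = 1 implies g = sigma b / b) gives
  exactness at J_1. If N theta = a z^p, then d is a root of unity times alpha z, which forces
  N g = xi; conversely, if N n = xi, Hilbert 90 applied to (n^k)^p yields theta with
  sigma theta = theta (n^k)^p, and the norm of theta is a^k up to p-th powers.
*)

theory Submission
  imports Defs "HOL-Computational_Algebra.Polynomial"
begin

lemma prod_lessThan_Suc_periodic:
  fixes f :: "nat \<Rightarrow> 'a::comm_monoid_mult"
  assumes "f n = f 0"
  shows "(\<Prod>j<n. f (Suc j)) = (\<Prod>j<n. f j)"
proof (cases n)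
  case (Suc m)
  have "(\<Prod>j<n. f (Suc j)) = (\<Prod>j<m. f (Suc j)) * f 0" using assms by (simp add: Suc)
  also have "\<dots> = (\<Prod>j<n. f j)" by (simp add: Suc prod.lessThan_Suc_shift mult.commute del: prod.lessThan_Suc)
  finally show ?thesis .
qed simp

lemma sum_lessThan_Suc_periodic:
  fixes f :: "nat \<Rightarrow> 'a::comm_monoid_add"
  assumes "f n = f 0"
  shows "(\<Sum>j<n. f (Suc j)) = (\<Sum>j<n. f j)"
proof (cases n)
  case (Suc m)
  have "(\<Sum>j<n. f (Suc j)) = (\<Sum>j<m. f (Suc j)) + f 0" using assms by (simp add: Suc)
  also have "\<dots> = (\<Sum>j<n. f j)" by (simp add: Suc sum.lessThan_Suc_shift add.commute del: sum.lessThan_Suc)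
  finally show ?thesis .
qed simp

lemma monic_eq_prod_linear_factors:
  fixes P :: "'k::field poly"
  assumes "finite R" "lead_coeff P = 1" "card R = degree P" "\<forall>x\<in>R. poly P x = 0"
  shows "P = (\<Prod>x\<in>R. [:-x, 1:])"
  using assms
proof (induction R arbitrary: P rule: finite_induct)
  case empty
  then obtain c where "P = [:c:]" by (auto elim!: degree_eq_zeroE)
  then show ?case using empty.prems(1) by (simp add: one_pCons)
next
  case (insert r R)
  have "[:-r, 1:] dvd P" using insert.prems(3) poly_eq_0_iff_dvd by auto
  then obtain Q where Q: "P = [:-r, 1:] * Q" by (auto elim: dvdE)
  have "Q \<noteq> 0" using Q insert.prems(1) by auto
  have "lead_coeff Q = 1" using Q insert.prems(1) by (simp only: lead_coeff_mult) simp
  moreover have "card R = degree Q"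
    using Q \<open>Q \<noteq> 0\<close> insert.hyps insert.prems(2) by (simp del: mult_pCons_left add: degree_mult_eq)
  moreover have "\<forall>x\<in>R. poly Q x = 0" using Q insert.hyps insert.prems(3) by auto
  ultimately have "Q = (\<Prod>x\<in>R. [:-x, 1:])" using insert.IH by blast
  then show ?case using Q insert.hyps by simp
qed

lemma monic_dvd_prod_linear_factors:
  fixes g :: "'k::field poly"
  assumes "finite R" "g dvd (\<Prod>x\<in>R. [:-x, 1:])" "lead_coeff g = 1"
  obtains I where "I \<subseteq> R" "g = (\<Prod>x\<in>I. [:-x, 1:])"
proof -
  have "\<exists>I\<subseteq>R. g = (\<Prod>x\<in>I. [:-x, 1:])"
    using assms
  proof (induction R arbitrary: g rule: finite_induct)
    case empty
    then obtain c where "g = [:c:]" using is_unit_poly_iff[of g] by auto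
    then show ?case using empty.prems(2) by auto
  next
    case (insert r R)
    have dvd: "g dvd [:-r, 1:] * (\<Prod>x\<in>R. [:-x, 1:])"
      using insert.prems(1) insert.hyps by (simp del: mult_pCons_left)
    show ?case
    proof (cases "poly g r = 0")
      case True
      then obtain h where h: "g = [:-r, 1:] * h" using poly_eq_0_iff_dvd by blast
      have "h dvd (\<Prod>x\<in>R. [:-x, 1:])"
        using dvd unfolding h by (subst (asm) dvd_mult_cancel_left) auto
      moreover have "lead_coeff h = 1" using h insert.prems(2) by (simp only: lead_coeff_mult) simp
      ultimately obtain I where I: "I \<subseteq> R" "h = (\<Prod>x\<in>I. [:-x, 1:])" using insert.IH by blast
      have "finite I" "r \<notin> I" using I(1) insert.hyps finite_subset by auto
      then have "g = (\<Prod>x\<in>insert r I. [:-x, 1:])" using h I(2) by simp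
      then show ?thesis using I(1) by blast
    next
      case False
      obtain k where k: "[:-r, 1:] * (\<Prod>x\<in>R. [:-x, 1:]) = g * k" using dvd by blast
      then have "poly (g * k) r = 0" by (metis mult_eq_0_iff poly_mult poly_eq_0_iff_dvd dvd_triv_left)
      then have "poly k r = 0" using False by simp
      then obtain k' where "k = [:-r, 1:] * k'" using poly_eq_0_iff_dvd by blast
      then have "[:-r, 1:] * (\<Prod>x\<in>R. [:-x, 1:]) = [:-r, 1:] * (g * k')"
        using k by (simp only: ac_simps)
      then have "(\<Prod>x\<in>R. [:-x, 1:]) = g * k'" by (simp only: mult_cancel_left) simp
      then have "g dvd (\<Prod>x\<in>R. [:-x, 1:])" by (rule dvdI)
      then show ?thesis using insert.IH insert.prems(2) by blast
    qed
  qed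
  then show ?thesis using that by (elim exE conjE)
qed

lemma primitive_root_nonzero:
  assumes "primitive_root n \<xi>" "0 < n"
  shows "\<xi> \<noteq> 0"
  using assms by (auto simp: primitive_root_def zero_power)

lemma primitive_root_power_root:
  assumes "primitive_root n \<xi>"
  shows "(\<xi> ^ j) ^ n = 1"
proof -
  have "(\<xi> ^ j) ^ n = (\<xi> ^ n) ^ j" by (simp add: power_mult[symmetric] mult.commute)
  then show ?thesis using assms by (simp add: primitive_root_def)
qed

lemma primitive_root_power_inj:
  assumes \<xi>: "primitive_root n \<xi>" and "i < n" "j < n" "\<xi> ^ i = \<xi> ^ j"
  shows "i = j"
proof -
  have "\<xi> ^ (j - i) = 1" if "i < j" "j < n" "\<xi> ^ i = \<xi> ^ j" for i j
  proof -
    have "\<xi> ^ i * \<xi> ^ (j - i) = \<xi> ^ j" using that(1) by (simp flip: power_add)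
    then have "\<xi> ^ i * \<xi> ^ (j - i) = \<xi> ^ i * 1" using that(3) by simp
    then show ?thesis using primitive_root_nonzero[OF \<xi>] that by simp
  qed
  moreover have "\<xi> ^ k \<noteq> 1" if "0 < k" "k < n" for k
    using \<xi> that by (simp add: primitive_root_def)
  ultimately show ?thesis using assms(2-4)
    by (cases i j rule: linorder_cases) (fastforce, simp, fastforce)
qed

lemma roots_of_unity_eq_powers:
  fixes \<xi> :: "'k::field"
  assumes \<xi>: "primitive_root n \<xi>" and "0 < n"
  shows "{c. c ^ n = 1} = (\<lambda>j. \<xi> ^ j) ` {..<n}"
proof -
  have powers: "(\<lambda>j. \<xi> ^ j) ` {..<n} \<subseteq> {c. c ^ n = 1}"
    using primitive_root_power_root[OF \<xi>] by auto
  have nz: "monom 1 n - 1 \<noteq> (0::'k poly)"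
  proof
    assume "monom 1 n - 1 = (0::'k poly)"
    then have "coeff (monom 1 n - 1) n = (0::'k)" by simp
    then show False using \<open>0 < n\<close> by simp
  qed
  have roots: "{c. c ^ n = 1} = {c. poly (monom 1 n - 1) c = (0::'k)}" by (simp add: poly_monom)
  have "degree (monom 1 n - 1 :: 'k poly) \<le> n"
    using degree_diff_le_max[of "monom 1 n" "1::'k poly"] degree_monom_le[of "1::'k" n] by simp
  then have "card {c::'k. c ^ n = 1} \<le> n"
    unfolding roots using card_poly_roots_bound[OF nz] by linarith
  moreover have "finite {c::'k. c ^ n = 1}" unfolding roots using poly_roots_finite[OF nz] .
  moreover have "card ((\<lambda>j. \<xi> ^ j) ` {..<n}) = n"
    using primitive_root_power_inj[OF \<xi>] by (subst card_image) (auto intro: inj_onI)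
  ultimately show ?thesis using card_seteq[OF _ powers] by simp
qed

lemma sum_powers_primitive_root:
  fixes \<xi> :: "'k::field"
  assumes \<xi>: "primitive_root n \<xi>" and "0 < j" "j < n"
  shows "(\<Sum>k<n. (\<xi> ^ j) ^ k) = 0"
proof -
  have "(\<xi> ^ j) ^ n = 1" using primitive_root_power_root[OF \<xi>] .
  moreover have "\<xi> ^ j \<noteq> 1" using \<xi> assms by (simp add: primitive_root_def)
  ultimately show ?thesis by (simp add: geometric_sum)
qed

lemma exists_power_sum_nonzero:
  fixes \<xi> :: "'k::field"
  assumes \<xi>: "primitive_root n \<xi>" and "of_nat n \<noteq> (0::'k)" and "e 0 \<noteq> 0"
  shows "\<exists>k<n. (\<Sum>j<n. (\<xi> ^ j) ^ k * e j) \<noteq> 0"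
proof (rule ccontr)
  assume "\<not> ?thesis"
  then have "0 = (\<Sum>k<n. \<Sum>j<n. (\<xi> ^ j) ^ k * e j)" by simp
  also have "\<dots> = (\<Sum>j<n. (\<Sum>k<n. (\<xi> ^ j) ^ k) * e j)"
    by (subst sum.swap) (simp add: sum_distrib_right)
  also have "\<dots> = (\<Sum>j<n. if j = 0 then of_nat n * e 0 else 0)"
    using sum_powers_primitive_root[OF \<xi>] by (intro sum.cong) auto
  also have "\<dots> = of_nat n * e 0"
    using \<open>of_nat n \<noteq> 0\<close> by (cases n) simp_all
  finally show False using assms(2,3) by simp
qed

lemma field_aut_0: "is_field_aut t \<Longrightarrow> t 0 = 0"
  unfolding is_field_aut_def by (metis add_cancel_right_right add_0)

lemma field_aut_nonzero: "is_field_aut t \<Longrightarrow> x \<noteq> 0 \<Longrightarrow> t x \<noteq> 0"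
  using field_aut_0 unfolding is_field_aut_def by (metis bij_is_inj injD)

lemma field_aut_power: "is_field_aut t \<Longrightarrow> t (x ^ n) = t x ^ n"
  unfolding is_field_aut_def by (induction n) auto

lemma field_aut_prod: "is_field_aut t \<Longrightarrow> t (prod f A) = (\<Prod>i\<in>A. t (f i))"
  unfolding is_field_aut_def by (induction A rule: infinite_finite_induct) auto

lemma field_aut_sum: "is_field_aut t \<Longrightarrow> t (sum f A) = (\<Sum>i\<in>A. t (f i))"
  using field_aut_0 unfolding is_field_aut_def by (induction A rule: infinite_finite_induct) auto

lemma field_aut_divide:
  assumes t: "is_field_aut t"
  shows "t (x / y) = t x / t y"
proof (cases "y = 0")
  case True
  then show ?thesis using field_aut_0[OF t] by simp
next
  case False
  then have "t (x / y) * t y = t x" using t unfolding is_field_aut_def by (metis nonzero_divide_eq_eq)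
  then show ?thesis using field_aut_nonzero[OF t False] by (simp add: field_simps)
qed

definition poly_over :: "'a::zero set \<Rightarrow> 'a poly \<Rightarrow> bool" where
  "poly_over S q \<longleftrightarrow> (\<forall>i. coeff q i \<in> S)"

lemma poly_over_pCons_iff: "poly_over S (pCons b q) \<longleftrightarrow> b \<in> S \<and> poly_over S q"
  unfolding poly_over_def by (metis coeff_pCons_0 coeff_pCons_Suc not0_implies_Suc coeff_pCons)

lemma Gal_poly_commute:
  assumes "t \<in> Gal F" "poly_over F q"
  shows "t (poly q x) = poly q (t x)"
  using assms(2)
proof (induction q)
  case 0
  then show ?case using assms(1) field_aut_0[of t] by (simp add: Gal_def)
next
  case (pCons b q)
  then show ?case using assms(1) by (simp add: Gal_def is_field_aut_def poly_over_pCons_iff)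
qed

lemma subfield_UNIV: "is_subfield UNIV"
  by (simp add: is_subfield_def)

locale subfield =
  fixes F :: "'k::field set"
  assumes subfield: "is_subfield F"
begin

lemma zero_closed: "0 \<in> F" and one_closed: "1 \<in> F"
  and add_closed: "x \<in> F \<Longrightarrow> y \<in> F \<Longrightarrow> x + y \<in> F"
  and mult_closed: "x \<in> F \<Longrightarrow> y \<in> F \<Longrightarrow> x * y \<in> F"
  and uminus_closed: "x \<in> F \<Longrightarrow> - x \<in> F"
  using subfield by (auto simp: is_subfield_def)

lemma inverse_closed: "x \<in> F \<Longrightarrow> inverse x \<in> F"
  using subfield zero_closed by (cases "x = 0") (auto simp: is_subfield_def)

lemma diff_closed: "x \<in> F \<Longrightarrow> y \<in> F \<Longrightarrow> x - y \<in> F"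
  using add_closed[of x "- y"] uminus_closed by simp

lemma divide_closed: "x \<in> F \<Longrightarrow> y \<in> F \<Longrightarrow> x / y \<in> F"
  using mult_closed inverse_closed by (simp add: divide_inverse)

lemma power_closed: "x \<in> F \<Longrightarrow> x ^ n \<in> F"
  by (induction n) (auto intro: one_closed mult_closed)

lemma sum_closed: "(\<And>i. i \<in> A \<Longrightarrow> f i \<in> F) \<Longrightarrow> sum f A \<in> F"
  by (induction A rule: infinite_finite_induct) (auto intro: zero_closed add_closed)

lemma prod_closed: "(\<And>i. i \<in> A \<Longrightarrow> f i \<in> F) \<Longrightarrow> prod f A \<in> F"
  by (induction A rule: infinite_finite_induct) (auto intro: one_closed mult_closed)

lemma poly_over_const: "c \<in> F \<Longrightarrow> poly_over F [:c:]"
  by (simp add: poly_over_def coeff_pCons zero_closed split: nat.split)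

lemma poly_over_0: "poly_over F 0" and poly_over_1: "poly_over F 1"
  using poly_over_const[OF zero_closed] poly_over_const[OF one_closed] by (simp_all add: one_pCons)

lemma poly_over_add: "poly_over F q \<Longrightarrow> poly_over F r \<Longrightarrow> poly_over F (q + r)"
  and poly_over_uminus: "poly_over F q \<Longrightarrow> poly_over F (- q)"
  and poly_over_diff: "poly_over F q \<Longrightarrow> poly_over F r \<Longrightarrow> poly_over F (q - r)"
  and poly_over_smult: "c \<in> F \<Longrightarrow> poly_over F q \<Longrightarrow> poly_over F (smult c q)"
  and poly_over_monom: "c \<in> F \<Longrightarrow> poly_over F (monom c n)"
  by (simp_all add: poly_over_def add_closed uminus_closed diff_closed mult_closed coeff_monom zero_closed)

lemma poly_over_mult: "poly_over F q \<Longrightarrow> poly_over F r \<Longrightarrow> poly_over F (q * r)"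
  unfolding poly_over_def coeff_mult by (auto intro!: sum_closed mult_closed)

lemma poly_over_prod: "(\<And>i. i \<in> A \<Longrightarrow> poly_over F (f i)) \<Longrightarrow> poly_over F (prod f A)"
  by (induction A rule: infinite_finite_induct) (auto intro: poly_over_1 poly_over_mult)

lemma poly_over_pcompose_scale: "c \<in> F \<Longrightarrow> poly_over F q \<Longrightarrow> poly_over F (pcompose q [:0, c:])"
  by (simp add: poly_over_def coeff_pcompose_linear mult_closed power_closed)

lemma poly_over_cancel_lead_coeff:
  assumes g: "poly_over F g" "lead_coeff g = 1" "0 < degree g"
    and h: "poly_over F h" "degree g \<le> degree h"
  defines "h' \<equiv> h - monom (lead_coeff h) (degree h - degree g) * g"
  shows "poly_over F h'" "degree h' < degree h"
proof -
  define k where "k = degree h - degree g"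
  define c where "c = lead_coeff h"
  have c: "c \<in> F" unfolding c_def using h(1) by (simp add: poly_over_def)
  then show "poly_over F h'"
    unfolding h'_def c_def[symmetric] using g(1) h(1) by (intro poly_over_diff poly_over_mult poly_over_monom)
  have k: "k + degree g = degree h" using h(2) k_def by simp
  have "degree (monom c k * g) \<le> degree h"
    using degree_mult_le[of "monom c k" g] degree_monom_le[of c k] k by linarith
  then have "degree h' \<le> degree h" unfolding h'_def c_def k_def using degree_diff_le by blast
  moreover have "coeff (monom c k * g) (degree h) = c"
    using k g(2) by (simp add: coeff_monom_mult flip: k)
  then have "coeff h' (degree h) = 0" unfolding h'_def c_def k_def by simp
  then have "h' = 0 \<or> degree h' \<noteq> degree h" by (metis leading_coeff_0_iff)
  ultimately show "degree h' < degree h" using g(3) h(2) by auto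
qed

lemma poly_over_divmod_monic:
  assumes g: "poly_over F g" "lead_coeff g = 1" and h: "poly_over F h"
  obtains s r where "poly_over F s" "poly_over F r" "h = s * g + r" "r = 0 \<or> degree r < degree g"
proof (cases "degree g = 0")
  case True
  then have "g = 1" using g(2) by (auto elim!: degree_eq_zeroE simp: one_pCons)
  then show ?thesis using that h poly_over_0 by simp
next
  case False
  have "\<exists>s r. poly_over F s \<and> poly_over F r \<and> h = s * g + r \<and> (r = 0 \<or> degree r < degree g)"
    using h
  proof (induction "degree h" arbitrary: h rule: less_induct)
    case less
    show ?case
    proof (cases "degree h < degree g")
      case True
      then show ?thesis using less.prems poly_over_0 by (intro exI[of _ 0] exI[of _ h]) auto
    next
      case deg_h: False
      define m where "m = monom (lead_coeff h) (degree h - degree g)"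
      obtain s r where sr: "poly_over F s" "poly_over F r" "h - m * g = s * g + r"
          "r = 0 \<or> degree r < degree g"
        using less.hyps poly_over_cancel_lead_coeff[OF g _ less.prems] False deg_h
        unfolding m_def by (metis not_le not_gr0)
      have "h = (s + m) * g + r" using sr(3) by (simp add: algebra_simps)
      moreover have "lead_coeff h \<in> F" using less.prems by (simp add: poly_over_def)
      then have "poly_over F (s + m)" unfolding m_def using sr(1) by (intro poly_over_add poly_over_monom)
      ultimately show ?thesis using sr by blast
    qed
  qed
  then show ?thesis using that by blast
qed

lemma class_eq_iff:
  assumes "x \<in> F" "x \<noteq> 0" "y \<in> F" "y \<noteq> 0"
  shows "classF F p x = classF F p y \<longleftrightarrow> (\<exists>z\<in>F. z \<noteq> 0 \<and> x = y * z ^ p)"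
proof
  assume "classF F p x = classF F p y"
  moreover have "x \<in> classF F p x" unfolding classF_def using one_closed by force
  ultimately show "\<exists>z\<in>F. z \<noteq> 0 \<and> x = y * z ^ p" unfolding classF_def by blast
next
  assume "\<exists>z\<in>F. z \<noteq> 0 \<and> x = y * z ^ p"
  then obtain z where z: "z \<in> F" "z \<noteq> 0" "x = y * z ^ p" by blast
  show "classF F p x = classF F p y"
  proof (intro set_eqI iffI)
    fix u assume "u \<in> classF F p x"
    then obtain w where w: "w \<in> F" "w \<noteq> 0" "u = x * w ^ p" unfolding classF_def by blast
    then have "u = y * (z * w) ^ p" using z(3) by (simp add: power_mult_distrib)
    moreover have "z * w \<in> F" "z * w \<noteq> 0" using w z mult_closed by auto
    ultimately show "u \<in> classF F p y" unfolding classF_def by blast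
  next
    fix u assume "u \<in> classF F p y"
    then obtain w where w: "w \<in> F" "w \<noteq> 0" "u = y * w ^ p" unfolding classF_def by blast
    then have "u = y * (z * (w / z)) ^ p" using z(2) by simp
    then have "u = y * z ^ p * (w / z) ^ p" by (simp only: power_mult_distrib mult.assoc)
    then have "u = x * (w / z) ^ p" unfolding z(3) .
    moreover have "w / z \<in> F" "w / z \<noteq> 0" using w z divide_closed by auto
    ultimately show "u \<in> classF F p x" unfolding classF_def by blast
  qed
qed

end

lemma classK_eq_classF_UNIV: "classK p = classF UNIV p"
  by (simp add: fun_eq_iff classK_def classF_def)

lemma classK_eq_iff:
  fixes t u :: "'k::field"
  assumes "t \<noteq> 0" "u \<noteq> 0"
  shows "classK p t = classK p u \<longleftrightarrow> (\<exists>y. y \<noteq> 0 \<and> t = u * y ^ p)"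
  using subfield.class_eq_iff[OF subfield.intro[OF subfield_UNIV]] assms
  by (simp add: classK_eq_classF_UNIV)

lemma field_aut_image_classK:
  assumes t: "is_field_aut \<sigma>"
  shows "\<sigma> ` classK p \<theta> = classK p (\<sigma> \<theta>)"
proof (intro set_eqI iffI)
  fix z assume "z \<in> \<sigma> ` classK p \<theta>"
  then obtain y where "y \<noteq> 0" "z = \<sigma> (\<theta> * y ^ p)" unfolding classK_def by blast
  then show "z \<in> classK p (\<sigma> \<theta>)" unfolding classK_def
    using t field_aut_nonzero[OF t] by (auto simp: is_field_aut_def field_aut_power)
next
  fix z assume "z \<in> classK p (\<sigma> \<theta>)"
  then obtain w where w: "w \<noteq> 0" "z = \<sigma> \<theta> * w ^ p" unfolding classK_def by blast
  obtain y where y: "\<sigma> y = w" using t unfolding is_field_aut_def by (metis bij_pointE)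
  have "y \<noteq> 0" using y w(1) field_aut_0[OF t] by auto
  moreover have "z = \<sigma> (\<theta> * y ^ p)" using w y t by (simp add: is_field_aut_def field_aut_power)
  ultimately show "z \<in> \<sigma> ` classK p \<theta>" unfolding classK_def by blast
qed

context subfield
begin

lemma classK_eq_if_classF_eq:
  assumes "x \<in> F" "x \<noteq> 0" "y \<in> F" "y \<noteq> 0" "classF F p x = classF F p y"
  shows "classK p x = classK p y"
  using assms class_eq_iff classK_eq_iff by blast

end

locale kummer = subfield F for F :: "'k::field set" +
  fixes p :: nat and \<xi> a \<alpha> :: 'k
  assumes prime_p: "prime p"
    and char_not_p: "of_nat p \<noteq> (0::'k)"
    and xi_in_F: "\<xi> \<in> F" and xi_primitive: "primitive_root p \<xi>"
    and a_in_F: "a \<in> F" and a_nonzero: "a \<noteq> 0" and a_not_power: "\<not> (\<exists>y\<in>F. a = y ^ p)"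
    and alpha_power: "\<alpha> ^ p = a" and alpha_generates: "generated_by F \<alpha>"
begin

lemma p_pos: "0 < p"
  using prime_p prime_gt_0_nat by blast

lemma xi_power_p: "\<xi> ^ p = 1"
  using xi_primitive by (simp add: primitive_root_def)

lemma xi_nonzero: "\<xi> \<noteq> 0"
  using primitive_root_nonzero[OF xi_primitive p_pos] .

lemma alpha_nonzero: "\<alpha> \<noteq> 0"
  using alpha_power a_nonzero p_pos by (auto simp: zero_power)

lemma alpha_power_power: "(\<alpha> ^ k) ^ p = a ^ k"
proof -
  have "(\<alpha> ^ k) ^ p = (\<alpha> ^ p) ^ k" by (simp add: power_mult[symmetric] mult.commute)
  then show ?thesis by (simp add: alpha_power)
qed

definition \<mu> :: "'k set" where "\<mu> = {c. c ^ p = 1}"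

lemma mu_eq_powers: "\<mu> = (\<lambda>j. \<xi> ^ j) ` {..<p}"
  unfolding \<mu>_def by (rule roots_of_unity_eq_powers[OF xi_primitive p_pos])

lemma xi_power_in_mu: "\<xi> ^ j \<in> \<mu>"
  using primitive_root_power_root[OF xi_primitive] by (simp add: \<mu>_def)

lemma xi_in_mu: "\<xi> \<in> \<mu>"
  using xi_power_in_mu[of 1] by simp

lemma mu_subset_F: "c \<in> \<mu> \<Longrightarrow> c \<in> F"
  using mu_eq_powers xi_in_F power_closed by auto

lemma finite_mu: "finite \<mu>"
  by (simp add: mu_eq_powers)

lemma card_mu: "card \<mu> = p"
  unfolding mu_eq_powers using primitive_root_power_inj[OF xi_primitive]
  by (subst card_image) (auto intro: inj_onI)

lemma one_in_mu: "1 \<in> \<mu>"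
  and mu_mult: "c \<in> \<mu> \<Longrightarrow> d \<in> \<mu> \<Longrightarrow> c * d \<in> \<mu>"
  and mu_nonzero: "c \<in> \<mu> \<Longrightarrow> c \<noteq> 0"
  and mu_power_mult: "c \<in> \<mu> \<Longrightarrow> (c * b) ^ p = b ^ p"
  using p_pos by (auto simp: \<mu>_def power_mult_distrib zero_power)

lemma mu_inverse: "c \<in> \<mu> \<Longrightarrow> \<exists>d\<in>\<mu>. c * d = 1"
  using p_pos by (intro bexI[of _ "c ^ (p - 1)"])
    (auto simp: \<mu>_def power_Suc[symmetric] power_mult[symmetric] mult.commute[of _ p] power_mult
          simp del: power_Suc)

lemma divide_in_mu: "x ^ p = y ^ p \<Longrightarrow> y \<noteq> 0 \<Longrightarrow> x / y \<in> \<mu>"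
  by (simp add: \<mu>_def power_divide)

lemma alpha_power_notin_F:
  assumes "0 < d" "d < p"
  shows "\<alpha> ^ d \<notin> F"
proof
  assume "\<alpha> ^ d \<in> F"
  have "\<not> p dvd d" using assms by (auto dest: dvd_imp_le)
  then have "coprime p d" using prime_imp_coprime[OF prime_p] by blast
  then obtain x y where xy: "d * x = p * y + 1"
    using bezout_nat[of d p] assms(1) by (auto simp: coprime_iff_gcd_eq_1 gcd.commute)
  have "(\<alpha> ^ d) ^ x = a ^ y * \<alpha>"
    by (simp add: xy power_add alpha_power[symmetric] flip: power_mult)
  then have "(\<alpha> ^ d) ^ x / a ^ y = \<alpha>" using a_nonzero by (simp add: field_simps)
  moreover have "(\<alpha> ^ d) ^ x / a ^ y \<in> F"
    using divide_closed[OF power_closed[OF \<open>\<alpha> ^ d \<in> F\<close>] power_closed[OF a_in_F]] .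
  ultimately have "\<alpha> \<in> F" by (simp only:)
  then show False using a_not_power alpha_power by blast
qed

definition kummer_poly :: "'k poly" where "kummer_poly = monom 1 p - [:a:]"

lemma poly_kummer_poly: "poly kummer_poly x = x ^ p - a"
  by (simp add: kummer_poly_def poly_monom)

lemma poly_over_kummer_poly: "poly_over F kummer_poly"
  unfolding kummer_poly_def by (intro poly_over_diff poly_over_monom poly_over_const one_closed a_in_F)

lemma degree_kummer_poly: "degree kummer_poly = p"
  and lead_coeff_kummer_poly: "lead_coeff kummer_poly = 1"
proof -
  have "degree kummer_poly \<le> p"
    using degree_diff_le_max[of "monom 1 p" "[:a:]"] degree_monom_le[of "1::'k" p]
    by (simp add: kummer_poly_def)
  moreover have "coeff kummer_poly p = 1"
    using p_pos by (simp add: kummer_poly_def coeff_pCons split: nat.split)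
  ultimately show "degree kummer_poly = p" by (simp add: le_antisym le_degree)
  then show "lead_coeff kummer_poly = 1" using \<open>coeff kummer_poly p = 1\<close> by simp
qed

lemma kummer_poly_eq_prod: "kummer_poly = (\<Prod>x\<in>(\<lambda>c. c * \<alpha>) ` \<mu>. [:-x, 1:])"
proof (rule monic_eq_prod_linear_factors)
  have "inj_on (\<lambda>c. c * \<alpha>) \<mu>" using alpha_nonzero by (simp add: inj_on_def)
  then show "card ((\<lambda>c. c * \<alpha>) ` \<mu>) = degree kummer_poly"
    using card_mu degree_kummer_poly by (simp add: card_image)
qed (auto simp: finite_mu lead_coeff_kummer_poly poly_kummer_poly mu_power_mult alpha_power)

lemma monic_factor_kummer_poly_degree:
  assumes m: "poly_over F m" "lead_coeff m = 1" "m dvd kummer_poly"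
  shows "degree m = 0 \<or> degree m = p"
proof -
  obtain I where I: "I \<subseteq> (\<lambda>c. c * \<alpha>) ` \<mu>" "m = (\<Prod>x\<in>I. [:-x, 1:])"
    using monic_dvd_prod_linear_factors[of "(\<lambda>c. c * \<alpha>) ` \<mu>" m] m kummer_poly_eq_prod finite_mu
    by auto
  have "finite I" using I(1) finite_mu finite_subset by blast
  define d where "d = card I"
  have "degree m = d" unfolding I(2) d_def by (subst degree_prod_eq_sum_degree) auto
  have "d \<le> p" unfolding d_def using card_mono[OF _ I(1)] card_image_le[OF finite_mu] card_mu finite_mu
    by (metis finite_imageI le_trans)
  have quot: "x / \<alpha> \<in> \<mu>" if "x \<in> I" for x using that I(1) alpha_nonzero by auto
  define u where "u = (\<Prod>x\<in>I. - (x / \<alpha>))"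
  have "u \<in> F" unfolding u_def using quot by (intro prod_closed uminus_closed mu_subset_F)
  have "u \<noteq> 0" unfolding u_def using quot mu_nonzero \<open>finite I\<close> by fastforce
  have "coeff m 0 = (\<Prod>x\<in>I. - x)" unfolding I(2) poly_0_coeff_0[symmetric] poly_prod by simp
  also have "\<dots> = (\<Prod>x\<in>I. - (x / \<alpha>) * \<alpha>)" using alpha_nonzero by (intro prod.cong) auto
  also have "\<dots> = u * (\<Prod>x\<in>I. \<alpha>)" unfolding u_def by (rule prod.distrib)
  also have "\<dots> = u * \<alpha> ^ d" unfolding d_def by simp
  finally have "\<alpha> ^ d = coeff m 0 / u" using \<open>u \<noteq> 0\<close> by (simp add: field_simps)
  moreover have "coeff m 0 \<in> F" using m(1) by (simp add: poly_over_def)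
  ultimately have "\<alpha> ^ d \<in> F" using \<open>u \<in> F\<close> by (simp add: divide_closed)
  then show ?thesis using alpha_power_notin_F \<open>d \<le> p\<close> \<open>degree m = d\<close> by fastforce
qed

lemma degree_ge_p_if_root_alpha:
  assumes "poly_over F g" "g \<noteq> 0" "poly g \<alpha> = 0"
  shows "p \<le> degree g"
proof -
  obtain g0 where g0: "poly_over F g0" "g0 \<noteq> 0" "poly g0 \<alpha> = 0" and "degree g0 \<le> degree g"
    and minimal: "\<And>r. poly_over F r \<Longrightarrow> r \<noteq> 0 \<Longrightarrow> poly r \<alpha> = 0 \<Longrightarrow> degree g0 \<le> degree r"
    using ex_has_least_nat[of "\<lambda>g. poly_over F g \<and> g \<noteq> 0 \<and> poly g \<alpha> = 0" g degree] assms by blast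
  define m where "m = smult (inverse (lead_coeff g0)) g0"
  have "lead_coeff g0 \<in> F" using g0(1) by (simp add: poly_over_def)
  then have m: "poly_over F m" "lead_coeff m = 1" "degree m = degree g0" "poly m \<alpha> = 0"
    unfolding m_def using g0 by (simp_all add: poly_over_smult inverse_closed)
  obtain s r where sr: "poly_over F r" "kummer_poly = s * m + r" "r = 0 \<or> degree r < degree m"
    using poly_over_divmod_monic[OF m(1,2) poly_over_kummer_poly] by blast
  have "poly kummer_poly \<alpha> = 0" by (simp add: poly_kummer_poly alpha_power)
  then have "poly r \<alpha> = 0" using sr(2) m(4) by simp
  then have "r = 0" using sr(1,3) minimal m(3) by fastforce
  then have "degree m = 0 \<or> degree m = p"
    using monic_factor_kummer_poly_degree[OF m(1,2)] sr(2) by simp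
  moreover have "degree m \<noteq> 0"
  proof
    assume "degree m = 0"
    then have "m = 1" using m(2) by (auto elim!: degree_eq_zeroE simp: one_pCons)
    then show False using m(4) by simp
  qed
  ultimately show ?thesis using m(3) \<open>degree g0 \<le> degree g\<close> by simp
qed

lemma poly_over_reduce:
  assumes "poly_over F q"
  obtains r where "poly_over F r" "degree r < p" "\<And>b. b ^ p = a \<Longrightarrow> poly q b = poly r b"
proof -
  obtain s r where "poly_over F r" "q = s * kummer_poly + r" "r = 0 \<or> degree r < p"
    using poly_over_divmod_monic[OF poly_over_kummer_poly lead_coeff_kummer_poly assms]
      degree_kummer_poly by metis
  then show ?thesis using that p_pos by (auto simp: poly_kummer_poly)
qed

lemma poly_over_root_to_conj:
  assumes "poly_over F q" "poly q \<alpha> = 0" "b ^ p = a"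
  shows "poly q b = 0"
proof -
  obtain r where r: "poly_over F r" "degree r < p" "\<And>b. b ^ p = a \<Longrightarrow> poly q b = poly r b"
    using poly_over_reduce[OF assms(1)] by blast
  have "poly r \<alpha> = 0" using r(3)[OF alpha_power] assms(2) by simp
  then have "r = 0" using degree_ge_p_if_root_alpha[OF r(1)] r(2) leD by blast
  then show ?thesis using r(3)[OF assms(3)] by simp
qed

lemma poly_over_root_from_conj:
  assumes q: "poly_over F q" and c: "c \<in> \<mu>" and root: "poly q (c * \<alpha>) = 0"
  shows "poly q \<alpha> = 0"
proof -
  obtain d where d: "d \<in> \<mu>" "c * d = 1" using mu_inverse[OF c] by blast
  have "poly (pcompose q [:0, c:]) \<alpha> = 0" using root by (simp add: poly_pcompose mult.commute)
  then have "poly (pcompose q [:0, c:]) (d * \<alpha>) = 0"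
    using poly_over_root_to_conj[OF poly_over_pcompose_scale[OF mu_subset_F[OF c] q]]
      mu_power_mult[OF d(1)] alpha_power by simp
  then have "poly q (c * (d * \<alpha>)) = 0" by (simp add: poly_pcompose ac_simps)
  moreover have "c * (d * \<alpha>) = \<alpha>" using d(2) by (simp add: mult.assoc[symmetric])
  ultimately show ?thesis by simp
qed

lemma poly_over_fixed_in_F:
  assumes q: "poly_over F q" and fixed: "poly q (\<xi> * \<alpha>) = poly q \<alpha>"
  shows "poly q \<alpha> \<in> F"
proof -
  obtain r where r: "poly_over F r" "degree r < p" "\<And>b. b ^ p = a \<Longrightarrow> poly q b = poly r b"
    using poly_over_reduce[OF q] by blast
  have "(\<xi> * \<alpha>) ^ p = a" using mu_power_mult[OF xi_in_mu] alpha_power by simp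
  then have "poly r (\<xi> * \<alpha>) = poly r \<alpha>" using fixed r(3) alpha_power by simp
  (* r(x) - r(xi x) has degree < p and vanishes at alpha, so r(x) = r(xi x), which kills every
     non-constant coefficient of r. *)
  define r' where "r' = r - pcompose r [:0, \<xi>:]"
  have "poly_over F r'" unfolding r'_def using r(1) xi_in_F by (intro poly_over_diff poly_over_pcompose_scale)
  moreover have "poly r' \<alpha> = 0"
    unfolding r'_def using \<open>poly r (\<xi> * \<alpha>) = poly r \<alpha>\<close> by (simp add: poly_pcompose mult.commute)
  moreover have "degree (pcompose r [:0, \<xi>:]) \<le> degree r"
    using degree_pcompose_le[of r "[:0, \<xi>:]"] xi_nonzero by simp
  then have "degree r' < p" unfolding r'_def using degree_diff_le[OF order.refl] r(2) le_less_trans by blast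
  ultimately have "r' = 0" using degree_ge_p_if_root_alpha leD by blast
  then have coeff_r: "coeff r i = \<xi> ^ i * coeff r i" for i
    unfolding r'_def using coeff_pcompose_linear[of r \<xi> i] by simp
  have "coeff r (Suc i) = 0" for i
  proof (cases "Suc i < p")
    case True
    then have "\<xi> ^ Suc i \<noteq> 1" using xi_primitive unfolding primitive_root_def by blast
    then show ?thesis using coeff_r[of "Suc i"] by (metis mult_cancel_right2)
  next
    case False
    then show ?thesis using r(2) by (simp add: coeff_eq_0)
  qed
  then have "r = [:coeff r 0:]" by (intro poly_eqI) (simp add: coeff_pCons split: nat.split)
  then have "poly r \<alpha> = coeff r 0" by (metis poly_pCons poly_0 mult_zero_right add.right_neutral)
  then have "poly q \<alpha> = coeff r 0" using r(3)[OF alpha_power] by simp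
  then show ?thesis using r(1) by (simp add: poly_over_def)
qed

lemma prod_conj_in_F:
  assumes q: "poly_over F q"
  shows "(\<Prod>j<p. poly q (\<xi> ^ j * \<alpha>)) \<in> F"
proof -
  define Q where "Q = (\<Prod>j<p. pcompose q [:0, \<xi> ^ j:])"
  have "poly_over F Q"
    unfolding Q_def using q xi_in_F by (intro poly_over_prod poly_over_pcompose_scale power_closed)
  have poly_Q: "poly Q b = (\<Prod>j<p. poly q (\<xi> ^ j * b))" for b
    unfolding Q_def by (simp add: poly_prod poly_pcompose mult.commute)
  have "poly Q (\<xi> * \<alpha>) = (\<Prod>j<p. poly q (\<xi> ^ Suc j * \<alpha>))"
    unfolding poly_Q by (simp add: ac_simps)
  also have "\<dots> = poly Q \<alpha>"
    unfolding poly_Q by (rule prod_lessThan_Suc_periodic) (simp add: xi_power_p)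
  finally have "poly Q \<alpha> \<in> F" by (rule poly_over_fixed_in_F[OF \<open>poly_over F Q\<close>])
  then show ?thesis by (simp only: poly_Q)
qed

definition F_alpha :: "'k set" where "F_alpha = {poly q \<alpha> | q. poly_over F q}"

(* 1 / q(alpha) is the product of the other conjugates q(xi^j alpha), 0 < j < p, divided by the
   product of all of them, which lies in F. *)
lemma inverse_in_F_alpha:
  assumes q: "poly_over F q" and nz: "poly q \<alpha> \<noteq> 0"
  shows "inverse (poly q \<alpha>) \<in> F_alpha"
proof -
  define f where "f j = poly q (\<xi> ^ j * \<alpha>)" for j
  define M where "M = (\<Prod>j<p. f j)"
  obtain n where n: "p = Suc n" using p_pos gr0_conv_Suc by blast
  have "M \<in> F" unfolding M_def f_def using prod_conj_in_F[OF q] .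
  have "f j \<noteq> 0" for j
    using poly_over_root_from_conj[OF q xi_power_in_mu] nz unfolding f_def by blast
  then have "M \<noteq> 0" unfolding M_def by simp
  define R where "R = (\<Prod>j<n. pcompose q [:0, \<xi> ^ Suc j:])"
  have "M = poly q \<alpha> * poly R \<alpha>"
    unfolding M_def R_def f_def n prod.lessThan_Suc_shift by (simp add: poly_prod poly_pcompose mult.commute)
  then have "inverse (poly q \<alpha>) = poly (smult (inverse M) R) \<alpha>"
    using \<open>M \<noteq> 0\<close> nz by (simp add: field_simps)
  moreover have "poly_over F (smult (inverse M) R)"
    unfolding R_def using q xi_in_F \<open>M \<in> F\<close>
    by (intro poly_over_smult inverse_closed poly_over_prod poly_over_pcompose_scale power_closed)
  ultimately show ?thesis unfolding F_alpha_def by blast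
qed

lemma F_alpha_subfield: "is_subfield F_alpha"
  unfolding is_subfield_def
proof (intro conjI ballI impI)
  show "0 \<in> F_alpha" "1 \<in> F_alpha"
    unfolding F_alpha_def using poly_over_0 poly_over_1 by force+
  fix x assume "x \<in> F_alpha"
  then obtain q where q: "poly_over F q" "x = poly q \<alpha>" unfolding F_alpha_def by blast
  show "- x \<in> F_alpha" unfolding F_alpha_def using q poly_over_uminus by force
  show "x \<noteq> 0 \<Longrightarrow> inverse x \<in> F_alpha" using inverse_in_F_alpha q by simp
  fix y assume "y \<in> F_alpha"
  then obtain r where r: "poly_over F r" "y = poly r \<alpha>" unfolding F_alpha_def by blast
  have "x + y = poly (q + r) \<alpha>" "x * y = poly (q * r) \<alpha>" using q r by simp_all
  then show "x + y \<in> F_alpha" "x * y \<in> F_alpha"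
    unfolding F_alpha_def using poly_over_add[OF q(1) r(1)] poly_over_mult[OF q(1) r(1)] by blast+
qed

lemma ex_poly_over_alpha: "\<exists>q. poly_over F q \<and> x = poly q \<alpha>"
proof -
  have "F \<subseteq> F_alpha" unfolding F_alpha_def using poly_over_const by force
  moreover have "\<alpha> \<in> F_alpha" unfolding F_alpha_def
    using poly_over_pCons_iff[of F 0 "[:1:]"] poly_over_const[OF one_closed] zero_closed by force
  ultimately have "F_alpha = UNIV" using alpha_generates F_alpha_subfield by (simp add: generated_by_def)
  then show ?thesis unfolding F_alpha_def by blast
qed

(* The choice of representative is irrelevant: polynomials over F that agree at alpha agree at
   every c * alpha with c^p = 1, by poly_over_root_to_conj. *)
definition aut :: "'k \<Rightarrow> 'k \<Rightarrow> 'k" where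
  "aut c x = poly (SOME q. poly_over F q \<and> x = poly q \<alpha>) (c * \<alpha>)"

lemma aut_poly:
  assumes c: "c \<in> \<mu>" and q: "poly_over F q"
  shows "aut c (poly q \<alpha>) = poly q (c * \<alpha>)"
proof -
  define q' where "q' = (SOME q'. poly_over F q' \<and> poly q \<alpha> = poly q' \<alpha>)"
  have q': "poly_over F q'" "poly q \<alpha> = poly q' \<alpha>"
    unfolding q'_def using someI_ex[OF ex_poly_over_alpha[of "poly q \<alpha>"]] by blast+
  have "poly (q' - q) (c * \<alpha>) = 0"
    using poly_over_root_to_conj[OF poly_over_diff[OF q'(1) q]] q'(2) mu_power_mult[OF c] alpha_power
    by simp
  moreover have "aut c (poly q \<alpha>) = poly q' (c * \<alpha>)" unfolding aut_def q'_def ..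
  ultimately show ?thesis by simp
qed

lemma aut_add: "c \<in> \<mu> \<Longrightarrow> aut c (x + y) = aut c x + aut c y"
  and aut_mult: "c \<in> \<mu> \<Longrightarrow> aut c (x * y) = aut c x * aut c y"
proof -
  assume c: "c \<in> \<mu>"
  obtain q r where q: "poly_over F q" "x = poly q \<alpha>" and r: "poly_over F r" "y = poly r \<alpha>"
    using ex_poly_over_alpha by meson
  show "aut c (x + y) = aut c x + aut c y"
    using aut_poly[OF c poly_over_add[OF q(1) r(1)]] aut_poly[OF c q(1)] aut_poly[OF c r(1)] q(2) r(2)
    by simp
  show "aut c (x * y) = aut c x * aut c y"
    using aut_poly[OF c poly_over_mult[OF q(1) r(1)]] aut_poly[OF c q(1)] aut_poly[OF c r(1)] q(2) r(2)
    by simp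
qed

lemma aut_const: "c \<in> \<mu> \<Longrightarrow> f \<in> F \<Longrightarrow> aut c f = f"
  using aut_poly[of c "[:f:]"] poly_over_const by simp

lemma aut_alpha: "c \<in> \<mu> \<Longrightarrow> aut c \<alpha> = c * \<alpha>"
  using aut_poly[of c "[:0, 1:]"] poly_over_pCons_iff[of F 0 "[:1:]"] poly_over_const one_closed zero_closed
  by simp

lemma aut_aut:
  assumes c: "c \<in> \<mu>" and d: "d \<in> \<mu>"
  shows "aut c (aut d x) = aut (c * d) x"
proof -
  obtain q where q: "poly_over F q" "x = poly q \<alpha>" using ex_poly_over_alpha by blast
  have "aut d x = poly (pcompose q [:0, d:]) \<alpha>"
    using aut_poly[OF d q(1)] q(2) by (simp add: poly_pcompose mult.commute)
  then have "aut c (aut d x) = poly (pcompose q [:0, d:]) (c * \<alpha>)"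
    using aut_poly[OF c poly_over_pcompose_scale[OF mu_subset_F[OF d] q(1)]] by simp
  also have "\<dots> = aut (c * d) x" using aut_poly[OF mu_mult[OF c d] q(1)] q(2) by (simp add: poly_pcompose ac_simps)
  finally show ?thesis .
qed

lemma aut_one: "aut 1 x = x"
  using ex_poly_over_alpha[of x] aut_poly[OF one_in_mu] by auto

lemma bij_aut:
  assumes c: "c \<in> \<mu>"
  shows "bij (aut c)"
proof -
  obtain d where d: "d \<in> \<mu>" "c * d = 1" using mu_inverse[OF c] by blast
  have "aut c (aut d x) = x" "aut d (aut c x) = x" for x
    using aut_aut[OF c d(1)] aut_aut[OF d(1) c] d(2) aut_one by (simp_all add: mult.commute)
  then show ?thesis by (metis bij_betw_byWitness subset_UNIV UNIV_I)
qed

lemma is_field_aut_aut: "c \<in> \<mu> \<Longrightarrow> is_field_aut (aut c)"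
  unfolding is_field_aut_def using bij_aut aut_add aut_mult aut_const one_closed by blast

lemma Gal_eq: "Gal F = (\<lambda>j. aut (\<xi> ^ j)) ` {..<p}"
proof
  show "(\<lambda>j. aut (\<xi> ^ j)) ` {..<p} \<subseteq> Gal F"
    using is_field_aut_aut[OF xi_power_in_mu] aut_const[OF xi_power_in_mu] by (auto simp: Gal_def)
  show "Gal F \<subseteq> (\<lambda>j. aut (\<xi> ^ j)) ` {..<p}"
  proof
    fix t assume t: "t \<in> Gal F"
    define c where "c = t \<alpha> / \<alpha>"
    have "t \<alpha> ^ p = a"
      using field_aut_power[of t \<alpha> p] t a_in_F alpha_power by (simp add: Gal_def)
    then have "c \<in> \<mu>" unfolding c_def \<mu>_def using alpha_nonzero alpha_power a_nonzero by (simp add: power_divide)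
    then obtain j where j: "j < p" "c = \<xi> ^ j" using mu_eq_powers by blast
    have "t x = aut c x" for x
    proof -
      obtain q where q: "poly_over F q" "x = poly q \<alpha>" using ex_poly_over_alpha by blast
      have "t \<alpha> = c * \<alpha>" unfolding c_def using alpha_nonzero by simp
      then show ?thesis using Gal_poly_commute[OF t q(1)] aut_poly[OF \<open>c \<in> \<mu>\<close> q(1)] q(2) by simp
    qed
    then show "t \<in> (\<lambda>j. aut (\<xi> ^ j)) ` {..<p}" using j by blast
  qed
qed

lemma inj_on_aut_powers: "inj_on (\<lambda>j. aut (\<xi> ^ j)) {..<p}"
proof (rule inj_onI)
  fix i j assume "i \<in> {..<p}" "j \<in> {..<p}" "aut (\<xi> ^ i) = aut (\<xi> ^ j)"
  then have "\<xi> ^ i * \<alpha> = \<xi> ^ j * \<alpha>" using aut_alpha[OF xi_power_in_mu] by metis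
  then show "i = j"
    using primitive_root_power_inj[OF xi_primitive] \<open>i \<in> {..<p}\<close> \<open>j \<in> {..<p}\<close> alpha_nonzero by simp
qed

lemma norm_eq_prod_aut: "normKF F x = (\<Prod>j<p. aut (\<xi> ^ j) x)"
  unfolding normKF_def Gal_eq using prod.reindex[OF inj_on_aut_powers, of "\<lambda>t. t x"] by simp

lemma aut_nonzero: "c \<in> \<mu> \<Longrightarrow> x \<noteq> 0 \<Longrightarrow> aut c x \<noteq> 0"
  and aut_power: "c \<in> \<mu> \<Longrightarrow> aut c (x ^ n) = aut c x ^ n"
  and aut_prod: "c \<in> \<mu> \<Longrightarrow> aut c (prod f A) = (\<Prod>i\<in>A. aut c (f i))"
  and aut_sum: "c \<in> \<mu> \<Longrightarrow> aut c (sum f A) = (\<Sum>i\<in>A. aut c (f i))"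
  and aut_divide: "c \<in> \<mu> \<Longrightarrow> aut c (x / y) = aut c x / aut c y"
  using is_field_aut_aut
  by (simp_all add: field_aut_nonzero field_aut_power field_aut_prod field_aut_sum
      field_aut_divide)

lemma aut_xi_aut_xi_power: "aut \<xi> (aut (\<xi> ^ j) x) = aut (\<xi> ^ Suc j) x"
  using aut_aut[OF xi_in_mu xi_power_in_mu] by simp

lemma fixed_in_F:
  assumes "aut \<xi> x = x"
  shows "x \<in> F"
proof -
  obtain q where q: "poly_over F q" "x = poly q \<alpha>" using ex_poly_over_alpha by blast
  have "poly q (\<xi> * \<alpha>) = poly q \<alpha>" using aut_poly[OF xi_in_mu q(1)] q(2) assms by simp
  then show ?thesis using poly_over_fixed_in_F[OF q(1)] q(2) by simp
qed

lemma norm_mult: "normKF F (x * y) = normKF F x * normKF F y"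
  unfolding norm_eq_prod_aut by (simp add: aut_mult[OF xi_power_in_mu] prod.distrib)

lemma norm_power: "normKF F (x ^ n) = normKF F x ^ n"
  unfolding norm_eq_prod_aut by (simp add: aut_power[OF xi_power_in_mu] prod_power_distrib)

lemma norm_nonzero: "x \<noteq> 0 \<Longrightarrow> normKF F x \<noteq> 0"
  unfolding norm_eq_prod_aut using aut_nonzero[OF xi_power_in_mu] by simp

lemma norm_of_F: "f \<in> F \<Longrightarrow> normKF F f = f ^ p"
  unfolding norm_eq_prod_aut using aut_const[OF xi_power_in_mu] by simp

lemma norm_in_F: "normKF F x \<in> F"
proof (rule fixed_in_F)
  have "aut \<xi> (normKF F x) = (\<Prod>j<p. aut (\<xi> ^ Suc j) x)"
    unfolding norm_eq_prod_aut by (simp add: aut_prod[OF xi_in_mu] aut_xi_aut_xi_power)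
  also have "\<dots> = normKF F x"
    unfolding norm_eq_prod_aut by (rule prod_lessThan_Suc_periodic) (simp add: xi_power_p aut_one)
  finally show "aut \<xi> (normKF F x) = normKF F x" .
qed

lemma F_pth_power_in_K:
  assumes "f \<in> F" "b ^ p = f" "b \<noteq> 0"
  obtains k g where "g \<in> F" "g \<noteq> 0" "f = a ^ k * g ^ p"
proof -
  define c where "c = aut \<xi> b / b"
  have "c ^ p = aut \<xi> (b ^ p) / b ^ p" unfolding c_def by (simp add: aut_power[OF xi_in_mu] power_divide)
  then have "c \<in> \<mu>" using assms aut_const[OF xi_in_mu] by (auto simp: \<mu>_def)
  then obtain k where k: "c = \<xi> ^ k" using mu_eq_powers by blast
  define g where "g = b / \<alpha> ^ k"
  have "aut \<xi> b = \<xi> ^ k * b" using k assms(3) unfolding c_def by (simp add: divide_eq_eq)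
  then have "aut \<xi> g = g"
    unfolding g_def using aut_alpha[OF xi_in_mu] xi_nonzero
    by (simp add: aut_divide[OF xi_in_mu] aut_power[OF xi_in_mu] power_mult_distrib)
  then have "g \<in> F" by (rule fixed_in_F)
  moreover have "g \<noteq> 0" unfolding g_def using assms(3) alpha_nonzero by simp
  moreover have "f = a ^ k * g ^ p"
    using assms(2) alpha_nonzero a_nonzero by (simp add: g_def power_divide alpha_power_power)
  ultimately show ?thesis using that by blast
qed

definition partial_norm :: "'k \<Rightarrow> nat \<Rightarrow> 'k" where
  "partial_norm g j = (\<Prod>i<j. aut (\<xi> ^ i) g)"

lemma partial_norm_0: "partial_norm g 0 = 1"
  by (simp add: partial_norm_def)

lemma partial_norm_p: "partial_norm g p = normKF F g"
  by (simp add: partial_norm_def norm_eq_prod_aut)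

lemma partial_norm_nonzero: "g \<noteq> 0 \<Longrightarrow> partial_norm g j \<noteq> 0"
  unfolding partial_norm_def using aut_nonzero[OF xi_power_in_mu] by simp

lemma aut_xi_partial_norm: "aut \<xi> (partial_norm g j) * g = partial_norm g (Suc j)"
  unfolding partial_norm_def
  by (simp add: aut_prod[OF xi_in_mu] aut_xi_aut_xi_power prod.lessThan_Suc_shift aut_one
      mult.commute del: prod.lessThan_Suc)

lemma aut_xi_power_cocycle:
  assumes "aut \<xi> t = t * g ^ p"
  shows "aut (\<xi> ^ j) t = t * partial_norm g j ^ p"
proof (induction j)
  case 0
  then show ?case by (simp add: aut_one partial_norm_0)
next
  case (Suc j)
  have "aut (\<xi> ^ Suc j) t = aut \<xi> (aut (\<xi> ^ j) t)" by (rule aut_xi_aut_xi_power[symmetric])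
  also have "\<dots> = aut \<xi> t * aut \<xi> (partial_norm g j) ^ p"
    by (simp add: Suc aut_mult[OF xi_in_mu] aut_power[OF xi_in_mu])
  also have "\<dots> = t * partial_norm g (Suc j) ^ p"
    by (simp add: assms power_mult_distrib ac_simps flip: aut_xi_partial_norm)
  finally show ?case .
qed

lemma norm_is_pth_power:
  assumes "aut \<xi> t = t * g ^ p"
  obtains d where "d ^ p = normKF F t" "aut \<xi> d = d * normKF F g"
proof
  define d where "d = t * (\<Prod>j<p. partial_norm g j)"
  show "d ^ p = normKF F t"
    unfolding d_def norm_eq_prod_aut aut_xi_power_cocycle[OF assms]
    by (simp add: power_mult_distrib prod.distrib prod_power_distrib)
  have "(\<Prod>j<p. partial_norm g (Suc j)) = (\<Prod>j<p. partial_norm g j) * normKF F g"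
    using prod.lessThan_Suc_shift[of "partial_norm g" p] prod.lessThan_Suc[of "partial_norm g" p]
    by (simp add: partial_norm_0 partial_norm_p)
  then show "aut \<xi> d = d * normKF F g"
    unfolding d_def
    by (simp add: assms aut_mult[OF xi_in_mu] aut_prod[OF xi_in_mu] prod.distrib ac_simps
        flip: aut_xi_partial_norm)
qed

lemma hilbert90:
  assumes g: "g \<noteq> 0" and norm_g: "normKF F g = 1"
  obtains b where "b \<noteq> 0" "aut \<xi> b = g * b"
proof -
  (* B is a twisted trace; by independence of the characters j |-> (xi^j)^k it cannot vanish on
     all of 1, alpha, ..., alpha^(p-1). *)
  define B where "B t = (\<Sum>j<p. aut (\<xi> ^ j) t / partial_norm g j)" for t
  have "aut \<xi> (B t) = g * B t" for t
  proof -
    have "aut \<xi> (B t) = (\<Sum>j<p. g * (aut (\<xi> ^ Suc j) t / partial_norm g (Suc j)))"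
      unfolding B_def using g partial_norm_nonzero[OF g]
      by (simp add: aut_sum[OF xi_in_mu] aut_divide[OF xi_in_mu] aut_xi_aut_xi_power
          field_simps flip: aut_xi_partial_norm)
    also have "\<dots> = g * B t"
      unfolding B_def sum_distrib_left
      by (rule sum_lessThan_Suc_periodic) (simp add: xi_power_p aut_one partial_norm_0 partial_norm_p norm_g)
    finally show ?thesis .
  qed
  moreover have "\<exists>k<p. B (\<alpha> ^ k) \<noteq> 0"
  proof -
    obtain k where "k < p" "(\<Sum>j<p. (\<xi> ^ j) ^ k * inverse (partial_norm g j)) \<noteq> 0"
      using exists_power_sum_nonzero[OF xi_primitive char_not_p, of "\<lambda>j. inverse (partial_norm g j)"]
      by (auto simp: partial_norm_0)
    moreover have "B (\<alpha> ^ k) = \<alpha> ^ k * (\<Sum>j<p. (\<xi> ^ j) ^ k * inverse (partial_norm g j))"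
      unfolding B_def sum_distrib_left
      by (intro sum.cong) (simp_all add: aut_power[OF xi_power_in_mu] aut_alpha[OF xi_power_in_mu]
          power_mult_distrib field_simps)
    ultimately show ?thesis using alpha_nonzero by auto
  qed
  ultimately show ?thesis using that by blast
qed

lemma J1_iff:
  assumes "t \<noteq> 0"
  shows "classK p t \<in> J1 F p \<longleftrightarrow> (\<exists>g. g \<noteq> 0 \<and> aut \<xi> t = t * g ^ p)"
proof
  assume "classK p t \<in> J1 F p"
  moreover have "aut \<xi> \<in> Gal F"
    using is_field_aut_aut[OF xi_in_mu] aut_const[OF xi_in_mu] by (simp add: Gal_def)
  ultimately have "aut \<xi> ` classK p t = classK p t" unfolding J1_def by blast
  then have "classK p (aut \<xi> t) = classK p t" using field_aut_image_classK[OF is_field_aut_aut[OF xi_in_mu]] by simp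
  then show "\<exists>g. g \<noteq> 0 \<and> aut \<xi> t = t * g ^ p"
    using classK_eq_iff aut_nonzero[OF xi_in_mu assms] assms by blast
next
  assume "\<exists>g. g \<noteq> 0 \<and> aut \<xi> t = t * g ^ p"
  then obtain g where g: "g \<noteq> 0" "aut \<xi> t = t * g ^ p" by blast
  have "\<sigma> ` classK p t = classK p t" if "\<sigma> \<in> Gal F" for \<sigma>
  proof -
    obtain j where j: "\<sigma> = aut (\<xi> ^ j)" using \<open>\<sigma> \<in> Gal F\<close> Gal_eq by blast
    have "classK p (aut (\<xi> ^ j) t) = classK p t"
      using aut_xi_power_cocycle[OF g(2)] classK_eq_iff aut_nonzero[OF xi_power_in_mu assms] assms
        partial_norm_nonzero[OF g(1)] by metis
    then show ?thesis using field_aut_image_classK[OF is_field_aut_aut[OF xi_power_in_mu]] j by simp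
  qed
  moreover have "classK p t \<in> JK p" unfolding JK_def using assms by blast
  ultimately show "classK p t \<in> J1 F p" unfolding J1_def by blast
qed

lemma a_power_in_F: "a ^ k \<in> F" and a_power_nonzero: "a ^ k \<noteq> 0"
  using power_closed[OF a_in_F] a_nonzero by simp_all

lemma gen_a_subset_FmodP: "gen_a F p a \<subseteq> FmodP F p"
  unfolding gen_a_def FmodP_def using a_power_in_F a_power_nonzero by blast

lemma classK_in_J1:
  assumes "x \<in> F" "x \<noteq> 0"
  shows "classK p x \<in> J1 F p"
proof -
  have "\<exists>g. g \<noteq> 0 \<and> aut \<xi> x = x * g ^ p"
    using aut_const[OF xi_in_mu assms(1)] by (intro exI[of _ 1]) simp
  then show ?thesis using J1_iff[OF assms(2)] by blast
qed

lemma classF_norm_eq: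
  assumes "t \<noteq> 0" "u \<noteq> 0" "classK p t = classK p u"
  shows "classF F p (normKF F t) = classF F p (normKF F u)"
proof -
  obtain y where "y \<noteq> 0" "t = u * y ^ p" using classK_eq_iff assms by blast
  then have "normKF F t = normKF F u * normKF F y ^ p" "normKF F y \<noteq> 0"
    by (simp_all add: norm_mult norm_power norm_nonzero)
  then show ?thesis
    using class_eq_iff norm_in_F norm_nonzero assms(1,2) by blast
qed

lemma classF_norm_in_gen_a:
  assumes "t \<noteq> 0" "classK p t \<in> J1 F p"
  shows "classF F p (normKF F t) \<in> gen_a F p a"
proof -
  obtain g where "aut \<xi> t = t * g ^ p" using J1_iff assms by blast
  then obtain d where d: "d ^ p = normKF F t" using norm_is_pth_power by blast
  then have "d \<noteq> 0" using norm_nonzero[OF assms(1)] p_pos by (auto simp: zero_power)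
  then obtain k h where "h \<in> F" "h \<noteq> 0" "normKF F t = a ^ k * h ^ p"
    using F_pth_power_in_K[OF norm_in_F d] by blast
  then have "classF F p (normKF F t) = classF F p (a ^ k)"
    using class_eq_iff norm_in_F norm_nonzero[OF assms(1)] a_power_in_F a_power_nonzero by blast
  then show ?thesis unfolding gen_a_def by blast
qed

lemma classK_eq_one_iff:
  assumes "x \<in> F" "x \<noteq> 0"
  shows "classK p x = classK p 1 \<longleftrightarrow> classF F p x \<in> gen_a F p a"
proof
  assume "classK p x = classK p 1"
  then obtain y where "y \<noteq> 0" "y ^ p = x" using classK_eq_iff[OF assms(2) one_neq_zero] by auto
  then obtain k h where "h \<in> F" "h \<noteq> 0" "x = a ^ k * h ^ p" using F_pth_power_in_K assms(1) by metis
  then have "classF F p x = classF F p (a ^ k)"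
    using class_eq_iff assms a_power_in_F a_power_nonzero by blast
  then show "classF F p x \<in> gen_a F p a" unfolding gen_a_def by blast
next
  assume "classF F p x \<in> gen_a F p a"
  then obtain k where "classF F p x = classF F p (a ^ k)" unfolding gen_a_def by blast
  then obtain z where z: "z \<noteq> 0" "x = a ^ k * z ^ p"
    using class_eq_iff assms a_power_in_F a_power_nonzero by blast
  then have "x = 1 * (\<alpha> ^ k * z) ^ p" by (simp add: power_mult_distrib alpha_power_power)
  moreover have "\<alpha> ^ k * z \<noteq> 0" using alpha_nonzero z(1) by simp
  ultimately show "classK p x = classK p 1" using classK_eq_iff[OF assms(2) one_neq_zero] by blast
qed

lemma classF_norm_eq_one_iff:
  assumes t: "t \<noteq> 0" "classK p t \<in> J1 F p"
  shows "classF F p (normKF F t) = classF F p 1 \<longleftrightarrow> (\<exists>x\<in>F. x \<noteq> 0 \<and> classK p t = classK p x)"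
proof
  assume "\<exists>x\<in>F. x \<noteq> 0 \<and> classK p t = classK p x"
  then obtain x where x: "x \<in> F" "x \<noteq> 0" "classK p t = classK p x" by blast
  then have "classF F p (normKF F t) = classF F p (x ^ p)"
    using classF_norm_eq[OF t(1) x(2,3)] norm_of_F by simp
  also have "\<dots> = classF F p 1"
    using class_eq_iff[OF power_closed[OF x(1)] _ one_closed one_neq_zero] x(1,2) by auto
  finally show "classF F p (normKF F t) = classF F p 1" .
next
  assume "classF F p (normKF F t) = classF F p 1"
  then obtain f where f: "f \<in> F" "f \<noteq> 0" "normKF F t = f ^ p"
    using class_eq_iff[OF norm_in_F norm_nonzero[OF t(1)] one_closed one_neq_zero] by auto
  obtain g where g: "g \<noteq> 0" "aut \<xi> t = t * g ^ p" using J1_iff t by blast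
  obtain d where d: "d ^ p = normKF F t" "aut \<xi> d = d * normKF F g"
    using norm_is_pth_power[OF g(2)] by blast
  have "d / f \<in> \<mu>" using divide_in_mu d(1) f by simp
  then have "d \<in> F" using mult_closed[OF mu_subset_F f(1)] f(2) by (metis nonzero_divide_eq_eq)
  moreover have "d \<noteq> 0" using d(1) norm_nonzero[OF t(1)] p_pos by (auto simp: zero_power)
  ultimately have "normKF F g = 1" using d(2) aut_const[OF xi_in_mu] by simp
  then obtain b where b: "b \<noteq> 0" "aut \<xi> b = g * b" using hilbert90 g(1) by blast
  define x where "x = t / b ^ p"
  have "aut \<xi> x = x" unfolding x_def using g b
    by (simp add: aut_divide[OF xi_in_mu] aut_power[OF xi_in_mu] power_mult_distrib)
  then have "x \<in> F" by (rule fixed_in_F)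
  moreover have "x \<noteq> 0" unfolding x_def using t(1) b(1) by simp
  moreover have "t = x * b ^ p" unfolding x_def using b(1) by simp
  ultimately show "\<exists>x\<in>F. x \<noteq> 0 \<and> classK p t = classK p x" using classK_eq_iff t(1) b(1) by blast
qed

lemma xi_norm_if_norm_class_a:
  assumes t: "t \<noteq> 0" "classK p t \<in> J1 F p" and norm_t: "classF F p (normKF F t) = classF F p a"
  shows "\<exists>g. g \<noteq> 0 \<and> normKF F g = \<xi>"
proof -
  obtain z where z: "z \<in> F" "z \<noteq> 0" "normKF F t = a * z ^ p"
    using norm_t class_eq_iff[OF norm_in_F norm_nonzero[OF t(1)] a_in_F a_nonzero] by blast
  obtain g where g: "g \<noteq> 0" "aut \<xi> t = t * g ^ p" using J1_iff t by blast
  obtain d where d: "d ^ p = normKF F t" "aut \<xi> d = d * normKF F g"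
    using norm_is_pth_power[OF g(2)] by blast
  define e where "e = d / (\<alpha> * z)"
  have "e \<in> \<mu>" unfolding e_def
    using divide_in_mu d(1) z(2,3) alpha_nonzero alpha_power by (simp add: power_mult_distrib)
  have "d = e * \<alpha> * z" unfolding e_def using alpha_nonzero z(2) by simp
  then have "aut \<xi> d = \<xi> * d"
    using mu_subset_F[OF \<open>e \<in> \<mu>\<close>] z(1) aut_const[OF xi_in_mu] aut_alpha[OF xi_in_mu]
    by (simp add: aut_mult[OF xi_in_mu] ac_simps)
  moreover have "d \<noteq> 0" using d(1) norm_nonzero[OF t(1)] p_pos by (auto simp: zero_power)
  ultimately have "normKF F g = \<xi>" using d(2) by (simp add: mult.commute)
  then show ?thesis using g(1) by blast
qed

lemma norm_class_surj_if_xi_norm: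
  assumes n: "n \<noteq> 0" "normKF F n = \<xi>" and c: "c \<in> gen_a F p a"
  shows "\<exists>t. t \<noteq> 0 \<and> classK p t \<in> J1 F p \<and> classF F p (normKF F t) = c"
proof -
  obtain k where k: "c = classF F p (a ^ k)" using c unfolding gen_a_def by blast
  define g where "g = n ^ k"
  have "g \<noteq> 0" unfolding g_def using n(1) by simp
  have norm_g: "normKF F g = \<xi> ^ k" unfolding g_def using n(2) by (simp add: norm_power)
  then have "normKF F (g ^ p) = 1" using xi_power_in_mu[of k] by (simp add: norm_power \<mu>_def)
  then obtain t where t: "t \<noteq> 0" "aut \<xi> t = g ^ p * t" using hilbert90 \<open>g \<noteq> 0\<close> by (metis power_not_zero)
  then have "aut \<xi> t = t * g ^ p" by (simp add: mult.commute)
  then have "classK p t \<in> J1 F p" using J1_iff[OF t(1)] \<open>g \<noteq> 0\<close> by blast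
  obtain d where d: "d ^ p = normKF F t" "aut \<xi> d = d * normKF F g"
    using norm_is_pth_power[OF \<open>aut \<xi> t = t * g ^ p\<close>] by blast
  define h where "h = d / \<alpha> ^ k"
  have "aut \<xi> h = h" unfolding h_def using d(2) norm_g aut_alpha[OF xi_in_mu] alpha_nonzero xi_nonzero
    by (simp add: aut_divide[OF xi_in_mu] aut_power[OF xi_in_mu] power_mult_distrib)
  then have "h \<in> F" by (rule fixed_in_F)
  have "d \<noteq> 0" using d(1) norm_nonzero[OF t(1)] p_pos by (auto simp: zero_power)
  then have "h \<noteq> 0" unfolding h_def using alpha_nonzero by simp
  have "normKF F t = a ^ k * h ^ p"
    unfolding d(1)[symmetric] h_def using alpha_nonzero a_nonzero
    by (simp add: power_divide alpha_power_power)
  then have "classF F p (normKF F t) = c"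
    unfolding k using class_eq_iff[OF norm_in_F norm_nonzero[OF t(1)] a_power_in_F a_power_nonzero]
      \<open>h \<in> F\<close> \<open>h \<noteq> 0\<close> by blast
  then show ?thesis using t(1) \<open>classK p t \<in> J1 F p\<close> by blast
qed

lemma norm_class_surj_iff:
  "(\<forall>c\<in>gen_a F p a. \<exists>t. t \<noteq> 0 \<and> classK p t \<in> J1 F p \<and> classF F p (normKF F t) = c)
   \<longleftrightarrow> (\<exists>t. t \<noteq> 0 \<and> normKF F t = \<xi>)"
proof
  assume "\<forall>c\<in>gen_a F p a. \<exists>t. t \<noteq> 0 \<and> classK p t \<in> J1 F p \<and> classF F p (normKF F t) = c"
  moreover have "classF F p a \<in> gen_a F p a" unfolding gen_a_def by (metis (mono_tags) power_one_right mem_Collect_eq)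
  ultimately show "\<exists>t. t \<noteq> 0 \<and> normKF F t = \<xi>" using xi_norm_if_norm_class_a by blast
qed (use norm_class_surj_if_xi_norm in blast)

end

theorem mainTheorem10:
  fixes F :: "'k::field set" and p :: nat and \<xi> a \<alpha> :: 'k
  assumes "prime p"
    and "is_subfield F"
    and "of_nat p \<noteq> (0::'k)"
    and "\<xi> \<in> F" and "primitive_root p \<xi>"
    and "a \<in> F" and "a \<noteq> 0" and "\<not> (\<exists>y\<in>F. a = y ^ p)"
    and "\<alpha> ^ p = a" and "generated_by F \<alpha>"
  shows
    \<comment> \<open>i: inclusion of the subgroup generated by [a]; injectivity of i is trivial\<close>
    "gen_a F p a \<subseteq> FmodP F p
     \<comment> \<open>epsilon is well defined and lands in J_1\<close>
     \<and> (\<forall>x\<in>F. \<forall>y\<in>F. x \<noteq> 0 \<and> y \<noteq> 0 \<and> classF F p x = classF F p y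
            \<longrightarrow> classK p x = classK p y)
     \<and> (\<forall>x\<in>F. x \<noteq> 0 \<longrightarrow> classK p x \<in> J1 F p)
     \<comment> \<open>N is well defined on J_1 with values in the subgroup generated by [a]\<close>
     \<and> (\<forall>\<theta>. \<theta> \<noteq> 0 \<and> classK p \<theta> \<in> J1 F p \<longrightarrow>
            normKF F \<theta> \<in> F \<and> normKF F \<theta> \<noteq> 0 \<and> classF F p (normKF F \<theta>) \<in> gen_a F p a)
     \<and> (\<forall>\<theta> \<eta>. \<theta> \<noteq> 0 \<and> \<eta> \<noteq> 0 \<and> classK p \<theta> \<in> J1 F p \<and> classK p \<theta> = classK p \<eta>
            \<longrightarrow> classF F p (normKF F \<theta>) = classF F p (normKF F \<eta>))
     \<comment> \<open>exactness at F^x/F^{x p}: ker epsilon = image of i\<close>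
     \<and> (\<forall>x\<in>F. x \<noteq> 0 \<longrightarrow> (classK p x = classK p 1 \<longleftrightarrow> classF F p x \<in> gen_a F p a))
     \<comment> \<open>exactness at J_1: ker N = image of epsilon\<close>
     \<and> (\<forall>\<theta>. \<theta> \<noteq> 0 \<and> classK p \<theta> \<in> J1 F p \<longrightarrow>
            (classF F p (normKF F \<theta>) = classF F p 1 \<longleftrightarrow>
             (\<exists>x\<in>F. x \<noteq> 0 \<and> classK p \<theta> = classK p x)))
     \<comment> \<open>surjectivity of N iff xi is a norm\<close>
     \<and> ((\<forall>c\<in>gen_a F p a. \<exists>\<theta>. \<theta> \<noteq> 0 \<and> classK p \<theta> \<in> J1 F p \<and> classF F p (normKF F \<theta>) = c)
        \<longleftrightarrow> (\<exists>\<theta>. \<theta> \<noteq> 0 \<and> normKF F \<theta> = \<xi>))"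
proof -
  interpret kummer F p \<xi> a \<alpha>
    using assms by unfold_locales
  have "\<forall>x\<in>F. \<forall>y\<in>F. x \<noteq> 0 \<and> y \<noteq> 0 \<and> classF F p x = classF F p y
            \<longrightarrow> classK p x = classK p y"
    using classK_eq_if_classF_eq by blast
  moreover have "\<forall>x\<in>F. x \<noteq> 0 \<longrightarrow> classK p x \<in> J1 F p"
    using classK_in_J1 by blast
  moreover have "\<forall>\<theta>. \<theta> \<noteq> 0 \<and> classK p \<theta> \<in> J1 F p \<longrightarrow>
      normKF F \<theta> \<in> F \<and> normKF F \<theta> \<noteq> 0 \<and> classF F p (normKF F \<theta>) \<in> gen_a F p a"
    using norm_in_F norm_nonzero classF_norm_in_gen_a by blast
  moreover have "\<forall>\<theta> \<eta>. \<theta> \<noteq> 0 \<and> \<eta> \<noteq> 0 \<and> classK p \<theta> \<in> J1 F p \<and> classK p \<theta> = classK p \<eta>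
      \<longrightarrow> classF F p (normKF F \<theta>) = classF F p (normKF F \<eta>)"
    using classF_norm_eq by blast
  moreover have "\<forall>x\<in>F. x \<noteq> 0 \<longrightarrow> (classK p x = classK p 1 \<longleftrightarrow> classF F p x \<in> gen_a F p a)"
    using classK_eq_one_iff by blast
  moreover have "\<forall>\<theta>. \<theta> \<noteq> 0 \<and> classK p \<theta> \<in> J1 F p \<longrightarrow>
      (classF F p (normKF F \<theta>) = classF F p 1 \<longleftrightarrow> (\<exists>x\<in>F. x \<noteq> 0 \<and> classK p \<theta> = classK p x))"
    using classF_norm_eq_one_iff by blast
  ultimately show ?thesis
    using gen_a_subset_FmodP norm_class_surj_iff by (intro conjI)
qed

end
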